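(* Let $L$ be a uniquely complemented lattice that is not distributive. Then $L$ has infinite width, i.e. $L$ contains antichains of arbitrarily large finite size (there is no finite bound on the cardinality of antichains in $L$).
   Context: A uniquely complemented lattice is a bounded lattice (with least element $0$ and greatest element $1$) in which every element $x$ has exactly one complement, i.e. exactly one $y$ with $x \wedge y = 0$ and $x \vee y = 1$. The width of a lattice is the supremum of the cardinalities of its antichains (sets of pairwise incomparable elements); the lattice has finite width if this supremum is a finite number. *)

theory Defs
  imports Main
begin

definition uniquely_complemented :: "'a::bounded_lattice itself \<Rightarrow> bool" where
  "uniquely_complemented _ \<longleftrightarrow>
     (\<forall>x::'a. \<exists>!y::'a. inf x y = bot \<and> sup x y = top)"

definition distributive_lattice :: "'a::lattice itself \<Rightarrow> bool" where
  "distributive_lattice _ \<longleftrightarrow>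
     (\<forall>x y z::'a. inf x (sup y z) = sup (inf x y) (inf x z))"

definition antichain_in :: "'a::order set \<Rightarrow> bool" where
  "antichain_in A \<longleftrightarrow> (\<forall>x\<in>A. \<forall>y\<in>A. x \<noteq> y \<longrightarrow> \<not> x \<le> y \<and> \<not> y \<le> x)"

definition finite_width :: "'a::order itself \<Rightarrow> bool" where
  "finite_width _ \<longleftrightarrow> (\<exists>n::nat. \<forall>A::'a set. antichain_in A \<longrightarrow> finite A \<and> card A \<le> n)"

end

theory Submission
  imports Defs
begin

text \<open>
  Write \<open>x'\<close> for the unique complement of \<open>x\<close>. Uniqueness makes \<open>'\<close> an involution, and
  \<open>y < x\<close> forces \<open>x \<sqinter> y' \<noteq> 0\<close>, since otherwise \<open>x\<close> would be a second complement of \<open>y'\<close>.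
  Hence a strictly descending chain \<open>f\<^sub>0 > \<dots> > f\<^sub>k\<close> yields the \<open>k\<close> nonzero elements
  \<open>d\<^sub>i = f\<^sub>i \<sqinter> f\<^sub>i\<^sub>+\<^sub>1'\<close>, which form an antichain: for \<open>i < j\<close> both \<open>d\<^sub>j \<le> f\<^sub>i\<^sub>+\<^sub>1\<close>
  and \<open>d\<^sub>i \<le> f\<^sub>i\<^sub>+\<^sub>1'\<close>, so a comparability would force one of them to be \<open>0\<close>.
  A nonzero element with no atom below it starts an infinite descending chain, so it remains to see that an atomic uniquely complemented
  lattice is distributive: every atom lies below \<open>a\<close> or below \<open>a'\<close>, which makes \<open>'\<close>
  antitone and atoms join-prime, and elements are determined by the atoms below them.
\<close>

definition atom :: "'a::order_bot \<Rightarrow> bool" where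
  "atom p \<longleftrightarrow> p \<noteq> bot \<and> (\<forall>z. z \<le> p \<longrightarrow> z = bot \<or> z = p)"

lemma descending_chain_if_no_atom_below:
  fixes x :: "'a::order_bot"
  assumes "x \<noteq> bot" and no_atom: "\<nexists>p. atom p \<and> p \<le> x"
  shows "\<exists>f::nat \<Rightarrow> 'a. \<forall>i. f (Suc i) < f i"
proof -
  have smaller: "\<exists>z. z < y \<and> z \<noteq> bot" if "y \<le> x" "y \<noteq> bot" for y
    using no_atom that unfolding atom_def by (auto simp: order_less_le)
  define g where "g y = (SOME z. z < y \<and> z \<noteq> bot)" for y :: 'a
  have g: "g y < y \<and> g y \<noteq> bot" if "y \<le> x" "y \<noteq> bot" for y
    unfolding g_def using someI_ex[OF smaller[OF that]] .
  have iter: "(g ^^ i) x \<le> x \<and> (g ^^ i) x \<noteq> bot" for i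
  proof (induction i)
    case (Suc i)
    then show ?case using g[of "(g ^^ i) x"] by auto
  qed (use \<open>x \<noteq> bot\<close> in auto)
  show ?thesis
    using g iter by (intro exI[of _ "\<lambda>i. (g ^^ i) x"]) auto
qed

lemma not_finite_width_if_arbitrarily_large_antichains:
  assumes "\<And>n. \<exists>A::'a::order set. antichain_in A \<and> finite A \<and> card A = n"
  shows "\<not> finite_width TYPE('a)"
proof
  assume "finite_width TYPE('a)"
  then obtain m where "\<forall>A::'a set. antichain_in A \<longrightarrow> finite A \<and> card A \<le> m"
    unfolding finite_width_def by blast
  then show False using assms[of "Suc m"] by fastforce
qed

definition ucompl :: "'a::bounded_lattice \<Rightarrow> 'a" where
  "ucompl x = (THE y. inf x y = bot \<and> sup x y = top)"

context
  fixes T :: "'a::bounded_lattice itself"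
  assumes uc: "uniquely_complemented T"
begin

lemma inf_ucompl: "inf x (ucompl x) = bot"
  and sup_ucompl: "sup x (ucompl x) = top" for x :: 'a
  using theI'[of "\<lambda>y. inf x y = bot \<and> sup x y = top"] uc
  unfolding ucompl_def uniquely_complemented_def by auto

lemma ucompl_unique: "inf x y = bot \<Longrightarrow> sup x y = top \<Longrightarrow> y = ucompl (x::'a)"
  using uc inf_ucompl[of x] sup_ucompl[of x] unfolding uniquely_complemented_def by blast

lemma ucompl_ucompl [simp]: "ucompl (ucompl x) = (x::'a)"
  using ucompl_unique inf_ucompl[of x] sup_ucompl[of x] by (metis inf_commute sup_commute)

lemma ucompl_top [simp]: "ucompl (top::'a) = bot"
  using ucompl_unique[of top bot] by simp

lemma eq_bot_if_le_ucompl: "z \<le> x \<Longrightarrow> z \<le> ucompl x \<Longrightarrow> z = (bot::'a)"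
  using inf_ucompl[of x] by (metis le_inf_iff bot_unique)

lemma inf_ucompl_neq_bot_if_less:
  assumes "(y::'a) < x"
  shows "inf x (ucompl y) \<noteq> bot"
proof
  assume "inf x (ucompl y) = bot"
  moreover have "sup x (ucompl y) = top"
    using sup_mono[OF less_imp_le[OF assms] order_refl, of "ucompl y"]
    unfolding sup_ucompl by (rule top_le)
  ultimately have "ucompl (ucompl y) = ucompl (ucompl x)" using ucompl_unique by metis
  then show False using assms by simp
qed

lemma antichain_of_descending_chain:
  fixes f :: "nat \<Rightarrow> 'a"
  assumes desc: "\<And>i. i < k \<Longrightarrow> f (Suc i) < f i"
  shows "\<exists>A::'a set. antichain_in A \<and> finite A \<and> card A = k"
proof -
  have antimono: "f j \<le> f i" if "i \<le> j" "j \<le> k" for i j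
    using that(1)
  proof (induction j rule: dec_induct)
    case (step n)
    then show ?case using desc[of n] that(2) by auto
  qed simp
  define d where "d i = inf (f i) (ucompl (f (Suc i)))" for i
  have "d i \<noteq> bot" if "i < k" for i
    unfolding d_def using inf_ucompl_neq_bot_if_less desc that by blast
  moreover have "d j \<le> f (Suc i)" if "i < j" "j < k" for i j
    unfolding d_def using antimono[of "Suc i" j] that by (simp add: le_infI1)
  moreover have "d i \<le> ucompl (f (Suc i))" for i
    unfolding d_def by simp
  ultimately have incomparable: "\<not> d i \<le> d j \<and> \<not> d j \<le> d i" if "i < j" "j < k" for i j
    using that eq_bot_if_le_ucompl by (meson order_trans order.strict_trans)
  then have "inj_on d {..<k}"
    by (intro inj_onI) (metis lessThan_iff linorder_neqE_nat order_refl)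
  moreover have "antichain_in (d ` {..<k})"
    unfolding antichain_in_def using incomparable
    by (metis imageE lessThan_iff linorder_neqE_nat)
  ultimately show ?thesis
    by (intro exI[of _ "d ` {..<k}"]) (simp add: card_image)
qed

lemma le_ucompl_atom_if_not_ge:
  assumes p: "atom (p::'a)" and "\<not> p \<le> a"
  shows "a \<le> ucompl p"
proof -
  define c where "c = ucompl (sup a p)"
  have c_inf: "inf (sup a p) c = bot" and c_sup: "sup (sup a p) c = top"
    unfolding c_def by (fact inf_ucompl sup_ucompl)+
  have "inf a c \<le> inf (sup a p) c" by (rule inf_mono) simp_all
  then have "inf a c = bot" unfolding c_inf by (rule bot_unique[THEN iffD1])
  have "sup a c \<noteq> top"
  proof
    assume "sup a c = top"
    then have "ucompl (ucompl (sup a p)) = ucompl (ucompl a)"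
      using \<open>inf a c = bot\<close> ucompl_unique c_def by metis
    then show False using \<open>\<not> p \<le> a\<close> by (simp add: sup.absorb_iff1)
  qed
  moreover have "sup p (sup a c) = top"
    using c_sup by (simp add: ac_simps)
  ultimately have "\<not> p \<le> sup a c" by (auto dest: sup.absorb2)
  then have "inf p (sup a c) = bot"
    using p inf.cobounded1[of p "sup a c"] unfolding atom_def by (auto simp: inf.absorb_iff1)
  then have "sup a c = ucompl p" using \<open>sup p (sup a c) = top\<close> by (rule ucompl_unique)
  then show ?thesis by (metis sup_ge1)
qed

lemma atom_le_or_le_ucompl: "atom (p::'a) \<Longrightarrow> p \<le> a \<or> p \<le> ucompl a"
proof (rule ccontr)
  assume p: "atom p" and "\<not> (p \<le> a \<or> p \<le> ucompl a)"
  then have "a \<le> ucompl p" "ucompl a \<le> ucompl p" using le_ucompl_atom_if_not_ge by auto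
  then have "ucompl p = top" using sup_ucompl[of a] by (metis le_supI top.extremum_uniqueI)
  then show False using p ucompl_ucompl ucompl_top unfolding atom_def by metis
qed

context
  assumes atomic: "\<And>x::'a. x \<noteq> bot \<Longrightarrow> \<exists>p. atom p \<and> p \<le> x"
begin

lemma le_if_atoms_below_le:
  assumes atoms: "\<And>p. atom p \<Longrightarrow> p \<le> a \<Longrightarrow> p \<le> (b::'a)"
  shows "a \<le> b"
proof (rule ccontr)
  assume "\<not> a \<le> b"
  then have "inf a b < a" by (simp add: less_le_not_le)
  then have "inf a (ucompl (inf a b)) \<noteq> bot" by (rule inf_ucompl_neq_bot_if_less)
  then obtain q where q: "atom q" "q \<le> a" "q \<le> ucompl (inf a b)"
    using atomic by (meson le_inf_iff)
  then have "q \<le> inf a b" using atoms by simp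
  then show False using q eq_bot_if_le_ucompl unfolding atom_def by blast
qed

lemma ucompl_antimono: "a \<le> (b::'a) \<Longrightarrow> ucompl b \<le> ucompl a"
proof (rule le_if_atoms_below_le)
  fix q assume "a \<le> b" and q: "atom q" "q \<le> ucompl b"
  then have "\<not> q \<le> a" using eq_bot_if_le_ucompl unfolding atom_def by (meson order_trans)
  then show "q \<le> ucompl a" using atom_le_or_le_ucompl q by blast
qed

lemma atom_le_supD:
  assumes q: "atom (q::'a)" "q \<le> sup a b"
  shows "q \<le> a \<or> q \<le> b"
proof (rule ccontr)
  define x where "x = inf (ucompl a) (ucompl b)"
  assume "\<not> (q \<le> a \<or> q \<le> b)"
  then have "q \<le> x" using atom_le_or_le_ucompl q unfolding x_def by auto
  moreover have "sup a b \<le> ucompl x"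
    using ucompl_antimono[of x "ucompl a"] ucompl_antimono[of x "ucompl b"]
    unfolding x_def by simp
  ultimately have "q = bot" using eq_bot_if_le_ucompl order_trans[OF q(2)] by blast
  then show False using q(1) unfolding atom_def by simp
qed

lemma distributive_if_atomic: "distributive_lattice TYPE('a)"
  unfolding distributive_lattice_def
proof (intro allI antisym)
  fix x y z :: 'a
  show "inf x (sup y z) \<le> sup (inf x y) (inf x z)"
  proof (rule le_if_atoms_below_le)
    fix p assume "atom p" "p \<le> inf x (sup y z)"
    then have "p \<le> inf x y \<or> p \<le> inf x z" using atom_le_supD by simp
    then show "p \<le> sup (inf x y) (inf x z)" by (auto intro: le_supI1 le_supI2)
  qed
  show "sup (inf x y) (inf x z) \<le> inf x (sup y z)"
    by (simp add: le_infI2)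
qed

end

end

theorem proposition7p3:
  assumes "uniquely_complemented TYPE('a::bounded_lattice)"
    and "\<not> distributive_lattice TYPE('a)"
  shows "\<not> finite_width TYPE('a) \<and>
         (\<forall>n::nat. \<exists>A::'a set. antichain_in A \<and> finite A \<and> card A = n)"
proof -
  obtain x :: 'a where "x \<noteq> bot" "\<nexists>p. atom p \<and> p \<le> x"
    using distributive_if_atomic[OF assms(1)] assms(2) by blast
  then obtain f :: "nat \<Rightarrow> 'a" where "\<And>i. f (Suc i) < f i"
    using descending_chain_if_no_atom_below by blast
  then have "\<exists>A::'a set. antichain_in A \<and> finite A \<and> card A = n" for n
    using antichain_of_descending_chain[OF assms(1)] by blast
  then show ?thesis
    using not_finite_width_if_arbitrarily_large_antichains by blast
qed

end
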